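(* Consider a generalised recombinator dynamics with rate $r\in(0,1]$ in which $g_1>0$, and let $x^*$ be a stationary state. Suppose that $v_{x^*}(a_d|\cdot)=u_{x^*}(a_d|\cdot)$ on $\Delta(\operatorname{supp}_{-d}(x^* ))$ for every $d$ and every trait $a_d$ with $x^*(a_d)=0$. Then, for every such $a_d$, the generalised partner dynamics of $a_d$ has a unique globally stable equilibrium.
   Context: Setting: $D=\{1,\dots,|D|\}$ finite, $|D|\ge2$; finite trait sets $A_d$; types $A=\prod_dA_d$, $a=(a_d,a_{-d})$, $a_{-d}\in A_{-d}=\prod_{d'\ne d}A_{d'}$. Payoff $u:A\times A\to\mathbb{R}_{>0}$; for $x\in\Delta(A)$: $u_x(a)=\sum_{a'}x(a')u(a,a')$, $u_x=\sum_ax(a)u_x(a)$, $x(a_d)=\sum_{a_{-d}}x(a_d,a_{-d})$, $x(a_{-d})=\sum_{a_d}x(a_d,a_{-d})$, trait payoff $u_x(a_d)=\frac1{x(a_d)}\sum_{a_{-d}}x(a_d,a_{-d})u_x(a_d,a_{-d})$; supports $\operatorname{supp}(x)$, $\operatorname{supp}_d(x)$, $\operatorname{supp}_{-d}(x)$ are the sets of types/traits/trait profiles with positive (marginal) frequency. A function $f:A\times\Delta(A)\to[0,1]$, $f(a|x)$, is regular if $\sum_af(a|x)=1$ for all $x$; its marginal function is $\varphi(a_d,x)=\frac1{x(a_d)}\sum_{a'_{-d}}f(a_d,a'_{-d}|x)$, and $\varphi$ is trait payoff increasing if $u_x(a_d)>u_x(\hat a_d)\Rightarrow\varphi(a_d,x)>\varphi(\hat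 a_d,x)$. Generalised recombinator dynamics: $\dot x(a)=(1-r)f_1(a|x)+rf_2(a|x)-x(a)$, where $f_1,f_2$ are non-negative, regular, with trait-payoff-increasing marginal functions; $f_1(a|x)=g_1(a|x)x(a)$ with $g_1$ differentiable and $g_1(a|x)>g_1(a'|x)\iff u_x(a)>u_x(a')$; and $f_2$ satisfies (i) differentiability, (ii) trait combination: $\prod_dx(a_d)>0\Rightarrow f_2(a|x)>0$, (iii) trait growth inertia: if $x(a_d)=0$ and $\partial f_2(a_d,a_{-d}|x)/\partial x(a')>0$ then $\prod_{d'\ne d}x(a_{d'})>0$ and $a'_d=a_d$. For $a_d$ with $x^*(a_d)=0$ and $a'_{-d}\in\operatorname{supp}_{-d}(x^* )$: $v_{x^*}(a_d|a'_{-d})=\frac{\partial f_2(a_d,a'_{-d}|x^* )/\partial x(a_d,a'_{-d})}{\prod_{d'\ne d}x^*(a'_{d'})}$. For $y\in\Delta(\operatorname{supp}_{-d}(x^* ))$: $u_{x^*}(a_d|y)=\sum_{a'_{-d}\in\operatorname{supp}_{-d}(x^* )}g_1(a_d,a'_{-d}|x^* )y(a'_{-d})$, $v_{x^*}(a_d|y)=\sum_{a'_{-d}}v_{x^*}(a_d|a'_{-d})y(a'_{-d})$, $U^r_{x^*}(a_d|y)=(1-r)u_{x^*}(a_d|y)+rv_{x^*}(a_d|y)$. The generalised partner dynamics of $a_d$ is the dynamics on $\Delta(\operatorname{supp}_{-d}(x^* ))$: $\dot y(a_{-d})=(1-r)g_1(a_d,a_{-d}|x^* )y(a_{-d})+r\big(\prod_{d'\ne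 d}x^*(a_{d'})\big)v_{x^*}(a_d|y)-y(a_{-d})U^r_{x^*}(a_d|y)$. It has a unique globally stable equilibrium $\eta$ if $y^t\to\eta$ as $t\to\infty$ from every initial condition. Stationary means $\dot x=0$. *)

theory Defs
  imports "HOL-Analysis.Analysis"
begin

text \<open>
Index set D is a finite type 'i; trait values live in a finite type 'v; trait set of
dimension d is A d.
A partner profile a_{-d} is an element of PiE (UNIV - {d}) A (value undefined at d);
the type (a_d, a_{-d}) is b(d := a_d).
\<close>

definition types :: "('i \<Rightarrow> 'v set) \<Rightarrow> ('i \<Rightarrow> 'v) set" where
  "types A = {a. \<forall>i. a i \<in> A i}"

definition partners :: "('i \<Rightarrow> 'v set) \<Rightarrow> 'i \<Rightarrow> ('i \<Rightarrow> 'v) set" where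
  "partners A d = PiE (UNIV - {d}) A"

definition dsimplex :: "'b set \<Rightarrow> ('b \<Rightarrow> real) set" where
  "dsimplex S = {y. (\<forall>b. 0 \<le> y b) \<and> (\<forall>b. b \<notin> S \<longrightarrow> y b = 0) \<and> sum y S = 1}"

definition upay :: "('i \<Rightarrow> 'v set) \<Rightarrow> (('i \<Rightarrow> 'v) \<Rightarrow> ('i \<Rightarrow> 'v) \<Rightarrow> real)
    \<Rightarrow> (('i \<Rightarrow> 'v) \<Rightarrow> real) \<Rightarrow> ('i \<Rightarrow> 'v) \<Rightarrow> real" where
  "upay A u x a = (\<Sum>a'\<in>types A. x a' * u a a')"

definition tfreq :: "('i \<Rightarrow> 'v set) \<Rightarrow> (('i \<Rightarrow> 'v) \<Rightarrow> real) \<Rightarrow> 'i \<Rightarrow> 'v \<Rightarrow> real" where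
  "tfreq A x d ad = (\<Sum>a\<in>{a\<in>types A. a d = ad}. x a)"

definition pfreq :: "('i \<Rightarrow> 'v set) \<Rightarrow> (('i \<Rightarrow> 'v) \<Rightarrow> real) \<Rightarrow> 'i \<Rightarrow> ('i \<Rightarrow> 'v) \<Rightarrow> real" where
  "pfreq A x d b = (\<Sum>ad\<in>A d. x (b(d := ad)))"

definition tsupp :: "('i \<Rightarrow> 'v set) \<Rightarrow> (('i \<Rightarrow> 'v) \<Rightarrow> real) \<Rightarrow> 'i \<Rightarrow> 'v set" where
  "tsupp A x d = {ad \<in> A d. tfreq A x d ad > 0}"

definition psupp :: "('i \<Rightarrow> 'v set) \<Rightarrow> (('i \<Rightarrow> 'v) \<Rightarrow> real) \<Rightarrow> 'i \<Rightarrow> ('i \<Rightarrow> 'v) set" where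
  "psupp A x d = {b \<in> partners A d. pfreq A x d b > 0}"

definition tpay :: "('i \<Rightarrow> 'v set) \<Rightarrow> (('i \<Rightarrow> 'v) \<Rightarrow> ('i \<Rightarrow> 'v) \<Rightarrow> real)
    \<Rightarrow> (('i \<Rightarrow> 'v) \<Rightarrow> real) \<Rightarrow> 'i \<Rightarrow> 'v \<Rightarrow> real" where
  "tpay A u x d ad = (1 / tfreq A x d ad) * (\<Sum>a\<in>{a\<in>types A. a d = ad}. x a * upay A u x a)"

definition marg :: "('i \<Rightarrow> 'v set) \<Rightarrow> (('i \<Rightarrow> 'v) \<Rightarrow> (('i \<Rightarrow> 'v) \<Rightarrow> real) \<Rightarrow> real)
    \<Rightarrow> (('i \<Rightarrow> 'v) \<Rightarrow> real) \<Rightarrow> 'i \<Rightarrow> 'v \<Rightarrow> real" where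
  "marg A f x d ad = (1 / tfreq A x d ad) * (\<Sum>a\<in>{a\<in>types A. a d = ad}. f a x)"

text \<open>Trait payoff increasing (on traits with positive frequency, where both sides are defined).\<close>
definition trait_payoff_increasing :: "('i \<Rightarrow> 'v set) \<Rightarrow> (('i \<Rightarrow> 'v) \<Rightarrow> ('i \<Rightarrow> 'v) \<Rightarrow> real)
    \<Rightarrow> (('i \<Rightarrow> 'v) \<Rightarrow> (('i \<Rightarrow> 'v) \<Rightarrow> real) \<Rightarrow> real) \<Rightarrow> bool" where
  "trait_payoff_increasing A u f \<longleftrightarrow>
     (\<forall>x \<in> dsimplex (types A). \<forall>d. \<forall>ad \<in> tsupp A x d. \<forall>ad' \<in> tsupp A x d.
        tpay A u x d ad > tpay A u x d ad' \<longrightarrow> marg A f x d ad > marg A f x d ad')"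

definition regular_fun :: "('i \<Rightarrow> 'v set) \<Rightarrow> (('i \<Rightarrow> 'v) \<Rightarrow> (('i \<Rightarrow> 'v) \<Rightarrow> real) \<Rightarrow> real) \<Rightarrow> bool" where
  "regular_fun A f \<longleftrightarrow>
     (\<forall>x \<in> dsimplex (types A). (\<forall>a \<in> types A. 0 \<le> f a x \<and> f a x \<le> 1) \<and>
        (\<Sum>a\<in>types A. f a x) = 1)"

definition diff_at :: "((('i::finite \<Rightarrow> 'v::finite) \<Rightarrow> real) \<Rightarrow> real) \<Rightarrow> (('i \<Rightarrow> 'v) \<Rightarrow> real) \<Rightarrow> bool" where
  "diff_at F x \<longleftrightarrow> (\<lambda>z::real^('i \<Rightarrow> 'v). F (vec_nth z)) differentiable (at (vec_lambda x))"

definition pderiv :: "((('i \<Rightarrow> 'v) \<Rightarrow> real) \<Rightarrow> real) \<Rightarrow> (('i \<Rightarrow> 'v) \<Rightarrow> real) \<Rightarrow> ('i \<Rightarrow> 'v) \<Rightarrow> real" where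
  "pderiv F x a' = deriv (\<lambda>t. F (x(a' := x a' + t))) 0"

definition gen_recombinator :: "('i::finite \<Rightarrow> 'v::finite set) \<Rightarrow> (('i \<Rightarrow> 'v) \<Rightarrow> ('i \<Rightarrow> 'v) \<Rightarrow> real)
    \<Rightarrow> (('i \<Rightarrow> 'v) \<Rightarrow> (('i \<Rightarrow> 'v) \<Rightarrow> real) \<Rightarrow> real)
    \<Rightarrow> (('i \<Rightarrow> 'v) \<Rightarrow> (('i \<Rightarrow> 'v) \<Rightarrow> real) \<Rightarrow> real) \<Rightarrow> bool" where
  "gen_recombinator A u g1 f2 \<longleftrightarrow>
     (let f1 = (\<lambda>a x. g1 a x * x a) in
      regular_fun A f1 \<and> regular_fun A f2 \<and>
      trait_payoff_increasing A u f1 \<and> trait_payoff_increasing A u f2 \<and>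
      (\<forall>x \<in> dsimplex (types A). \<forall>a \<in> types A. diff_at (g1 a) x) \<and>
      (\<forall>x \<in> dsimplex (types A). \<forall>a \<in> types A. \<forall>a' \<in> types A.
          g1 a x > g1 a' x \<longleftrightarrow> upay A u x a > upay A u x a') \<and>
      (\<forall>x \<in> dsimplex (types A). \<forall>a \<in> types A. diff_at (f2 a) x) \<and>
      (\<forall>x \<in> dsimplex (types A). \<forall>a \<in> types A.
          (\<Prod>d\<in>UNIV. tfreq A x d (a d)) > 0 \<longrightarrow> f2 a x > 0) \<and>
      (\<forall>x \<in> dsimplex (types A). \<forall>d. \<forall>a \<in> types A. \<forall>a' \<in> types A.
          tfreq A x d (a d) = 0 \<and> pderiv (f2 a) x a' > 0 \<longrightarrow>
            (\<Prod>d'\<in>UNIV - {d}. tfreq A x d' (a d')) > 0 \<and> a' d = a d))"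

definition stationary :: "('i \<Rightarrow> 'v set) \<Rightarrow> real \<Rightarrow> (('i \<Rightarrow> 'v) \<Rightarrow> (('i \<Rightarrow> 'v) \<Rightarrow> real) \<Rightarrow> real)
    \<Rightarrow> (('i \<Rightarrow> 'v) \<Rightarrow> (('i \<Rightarrow> 'v) \<Rightarrow> real) \<Rightarrow> real) \<Rightarrow> (('i \<Rightarrow> 'v) \<Rightarrow> real) \<Rightarrow> bool" where
  "stationary A r g1 f2 x \<longleftrightarrow> x \<in> dsimplex (types A) \<and>
     (\<forall>a \<in> types A. (1 - r) * (g1 a x * x a) + r * f2 a x - x a = 0)"

definition vpt :: "('i \<Rightarrow> 'v set) \<Rightarrow> (('i \<Rightarrow> 'v) \<Rightarrow> (('i \<Rightarrow> 'v) \<Rightarrow> real) \<Rightarrow> real)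
    \<Rightarrow> (('i \<Rightarrow> 'v) \<Rightarrow> real) \<Rightarrow> 'i \<Rightarrow> 'v \<Rightarrow> ('i \<Rightarrow> 'v) \<Rightarrow> real" where
  "vpt A f2 x d ad b = pderiv (f2 (b(d := ad))) x (b(d := ad)) / (\<Prod>d'\<in>UNIV - {d}. tfreq A x d' (b d'))"

definition uy :: "('i \<Rightarrow> 'v set) \<Rightarrow> (('i \<Rightarrow> 'v) \<Rightarrow> (('i \<Rightarrow> 'v) \<Rightarrow> real) \<Rightarrow> real)
    \<Rightarrow> (('i \<Rightarrow> 'v) \<Rightarrow> real) \<Rightarrow> 'i \<Rightarrow> 'v \<Rightarrow> (('i \<Rightarrow> 'v) \<Rightarrow> real) \<Rightarrow> real" where
  "uy A g1 x d ad y = (\<Sum>b\<in>psupp A x d. g1 (b(d := ad)) x * y b)"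

definition vy :: "('i \<Rightarrow> 'v set) \<Rightarrow> (('i \<Rightarrow> 'v) \<Rightarrow> (('i \<Rightarrow> 'v) \<Rightarrow> real) \<Rightarrow> real)
    \<Rightarrow> (('i \<Rightarrow> 'v) \<Rightarrow> real) \<Rightarrow> 'i \<Rightarrow> 'v \<Rightarrow> (('i \<Rightarrow> 'v) \<Rightarrow> real) \<Rightarrow> real" where
  "vy A f2 x d ad y = (\<Sum>b\<in>psupp A x d. vpt A f2 x d ad b * y b)"

definition Ury :: "('i \<Rightarrow> 'v set) \<Rightarrow> real \<Rightarrow> (('i \<Rightarrow> 'v) \<Rightarrow> (('i \<Rightarrow> 'v) \<Rightarrow> real) \<Rightarrow> real)
    \<Rightarrow> (('i \<Rightarrow> 'v) \<Rightarrow> (('i \<Rightarrow> 'v) \<Rightarrow> real) \<Rightarrow> real)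
    \<Rightarrow> (('i \<Rightarrow> 'v) \<Rightarrow> real) \<Rightarrow> 'i \<Rightarrow> 'v \<Rightarrow> (('i \<Rightarrow> 'v) \<Rightarrow> real) \<Rightarrow> real" where
  "Ury A r g1 f2 x d ad y = (1 - r) * uy A g1 x d ad y + r * vy A f2 x d ad y"

definition partner_field :: "('i \<Rightarrow> 'v set) \<Rightarrow> real \<Rightarrow> (('i \<Rightarrow> 'v) \<Rightarrow> (('i \<Rightarrow> 'v) \<Rightarrow> real) \<Rightarrow> real)
    \<Rightarrow> (('i \<Rightarrow> 'v) \<Rightarrow> (('i \<Rightarrow> 'v) \<Rightarrow> real) \<Rightarrow> real)
    \<Rightarrow> (('i \<Rightarrow> 'v) \<Rightarrow> real) \<Rightarrow> 'i \<Rightarrow> 'v \<Rightarrow> (('i \<Rightarrow> 'v) \<Rightarrow> real) \<Rightarrow> ('i \<Rightarrow> 'v) \<Rightarrow> real" where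
  "partner_field A r g1 f2 x d ad y b =
     (1 - r) * g1 (b(d := ad)) x * y b
     + r * (\<Prod>d'\<in>UNIV - {d}. tfreq A x d' (b d')) * vy A f2 x d ad y
     - y b * Ury A r g1 f2 x d ad y"

definition partner_solution :: "('i \<Rightarrow> 'v set) \<Rightarrow> real \<Rightarrow> (('i \<Rightarrow> 'v) \<Rightarrow> (('i \<Rightarrow> 'v) \<Rightarrow> real) \<Rightarrow> real)
    \<Rightarrow> (('i \<Rightarrow> 'v) \<Rightarrow> (('i \<Rightarrow> 'v) \<Rightarrow> real) \<Rightarrow> real)
    \<Rightarrow> (('i \<Rightarrow> 'v) \<Rightarrow> real) \<Rightarrow> 'i \<Rightarrow> 'v \<Rightarrow> (real \<Rightarrow> ('i \<Rightarrow> 'v) \<Rightarrow> real) \<Rightarrow> bool" where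
  "partner_solution A r g1 f2 x d ad Y \<longleftrightarrow>
     (\<forall>t\<ge>0. Y t \<in> dsimplex (psupp A x d)) \<and>
     (\<forall>t\<ge>0. \<forall>b \<in> psupp A x d.
        ((\<lambda>s. Y s b) has_real_derivative partner_field A r g1 f2 x d ad (Y t) b) (at t within {0..}))"

definition unique_gs_equilibrium :: "('i \<Rightarrow> 'v set) \<Rightarrow> real \<Rightarrow> (('i \<Rightarrow> 'v) \<Rightarrow> (('i \<Rightarrow> 'v) \<Rightarrow> real) \<Rightarrow> real)
    \<Rightarrow> (('i \<Rightarrow> 'v) \<Rightarrow> (('i \<Rightarrow> 'v) \<Rightarrow> real) \<Rightarrow> real)
    \<Rightarrow> (('i \<Rightarrow> 'v) \<Rightarrow> real) \<Rightarrow> 'i \<Rightarrow> 'v \<Rightarrow> bool" where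
  "unique_gs_equilibrium A r g1 f2 x d ad \<longleftrightarrow>
     (\<exists>\<eta> \<in> dsimplex (psupp A x d).
        (\<forall>b \<in> psupp A x d. partner_field A r g1 f2 x d ad \<eta> b = 0) \<and>
        (\<forall>\<eta>' \<in> dsimplex (psupp A x d).
            (\<forall>b \<in> psupp A x d. partner_field A r g1 f2 x d ad \<eta>' b = 0) \<longrightarrow> \<eta>' = \<eta>) \<and>
        (\<forall>Y. partner_solution A r g1 f2 x d ad Y \<longrightarrow>
            (\<forall>b \<in> psupp A x d. ((\<lambda>t. Y t b) \<longlongrightarrow> \<eta> b) at_top)))"

end

theory Submission
  imports Defs
begin

text \<open>
When \<open>v = u\<close>, the partner dynamics of an absent trait is
\<open>y\<^sub>b' = (1 - r) g\<^sub>b y\<^sub>b + p\<^sub>b U(y) - y\<^sub>b U(y)\<close> with \<open>U(y) = \<Sum> g y\<close>,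
\<open>p\<^sub>b = r \<Prod> x*(b\<^sub>d')\<close> and \<open>\<Sum> p = r\<close>, i.e. the projection onto the simplex of the linear
flow \<open>z' = M z\<close> with \<open>M = (1 - r) diag g + p g\<^sup>T\<close>, a matrix with positive rank-one part.
Its Perron root \<open>\<lambda>\<close> (\<open>perron_root\<close>) solves the secular equation \<open>\<Sum> g p / (\<lambda> - (1 - r) g) = 1\<close>, and its
right and left Perron vectors are \<open>\<eta> \<sim> p / (\<lambda> - (1 - r) g)\<close> (\<open>perron_vector\<close>) and
\<open>\<pi> \<sim> g / (\<lambda> - (1 - r) g)\<close> (\<open>dual_vector\<close>, normalised by \<open>\<Sum> \<pi> \<eta> = 1\<close>).
The normalised \<open>\<eta>\<close> is the rest point, and by Cauchy-Schwarz
\<open>Q(y) = (\<Sum> \<pi> y\<^sup>2 / \<eta>) / (\<Sum> \<pi> y)\<^sup>2 \<ge> 1\<close> (\<open>lyapunov\<close>), with equality only at \<open>\<eta>\<close>. It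
satisfies \<open>Q' \<le> -\<kappa> (Q - 1)\<close> along solutions, so \<open>Q \<rightarrow> 1\<close> exponentially fast,
which forces \<open>y \<rightarrow> \<eta>\<close>.
\<close>

lemma DERIV_nonpos_imp_nonincreasing_atLeast:
  fixes f f' :: "real \<Rightarrow> real"
  assumes deriv: "\<And>s. a \<le> s \<Longrightarrow> (f has_real_derivative f' s) (at s within {a..})"
    and nonpos: "\<And>s. a \<le> s \<Longrightarrow> f' s \<le> 0"
    and "a \<le> t"
  shows "f t \<le> f a"
proof (rule DERIV_nonpos_imp_decreasing_open[OF \<open>a \<le> t\<close>])
  have "continuous_on {a..} f"
    unfolding continuous_on_eq_continuous_within using deriv by (auto intro: DERIV_continuous)
  then show "continuous_on {a..t} f"
    by (rule continuous_on_subset) auto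
next
  fix s assume s: "a < s" "s < t"
  have "at s within {a..} = at s"
    by (rule at_within_interior) (use s in auto)
  then show "\<exists>y. DERIV f s :> y \<and> y \<le> 0"
    using deriv[of s] nonpos[of s] s by auto
qed

lemma exp_decay_if_DERIV_le:
  fixes f f' :: "real \<Rightarrow> real"
  assumes deriv: "\<And>s. 0 \<le> s \<Longrightarrow> (f has_real_derivative f' s) (at s within {0..})"
    and le: "\<And>s. 0 \<le> s \<Longrightarrow> f' s \<le> - \<kappa> * f s"
    and "0 \<le> t"
  shows "f t \<le> f 0 * exp (- \<kappa> * t)"
proof -
  define h where "h s = f s * exp (\<kappa> * s)" for s
  have "h t \<le> h 0"
  proof (rule DERIV_nonpos_imp_nonincreasing_atLeast[OF _ _ \<open>0 \<le> t\<close>])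
    fix s :: real assume s: "0 \<le> s"
    show "(h has_real_derivative (f' s + \<kappa> * f s) * exp (\<kappa> * s)) (at s within {0..})"
      unfolding h_def using deriv[OF s]
      by (auto intro!: derivative_eq_intros simp: algebra_simps)
    show "(f' s + \<kappa> * f s) * exp (\<kappa> * s) \<le> 0"
      using le[OF s] by (simp add: mult_nonpos_nonneg)
  qed
  then have "f t * exp (\<kappa> * t) * exp (- \<kappa> * t) \<le> f 0 * exp (- \<kappa> * t)"
    unfolding h_def by (intro mult_right_mono) auto
  then show ?thesis
    by (simp add: mult.assoc flip: exp_add)
qed

lemma secular_equation_has_root:
  fixes S :: "'b set" and w c :: "'b \<Rightarrow> real"
  assumes fin: "finite S" and ne: "S \<noteq> {}" and w_pos: "\<And>b. b \<in> S \<Longrightarrow> 0 < w b"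
  shows "\<exists>l. (\<forall>b\<in>S. c b < l) \<and> (\<Sum>b\<in>S. w b / (l - c b)) = 1"
proof -
  define m where "m = Max (c ` S)"
  have "m \<in> c ` S"
    unfolding m_def using fin ne by (intro Max_in) auto
  then obtain b0 where b0: "b0 \<in> S" "c b0 = m"
    by auto
  have c_le: "c b \<le> m" if "b \<in> S" for b
    unfolding m_def using fin that by auto
  define f where "f l = (\<Sum>b\<in>S. w b / (l - c b))" for l
  define l0 where "l0 = m + w b0"
  define l1 where "l1 = m + sum w S"
  have w_le: "w b \<le> sum w S" if "b \<in> S" for b
    by (rule member_le_sum) (use that fin w_pos in \<open>auto intro: less_imp_le\<close>)
  have m_less: "m < l0"
    unfolding l0_def using w_pos[OF b0(1)] by simp
  have w_sum_pos: "0 < sum w S"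
    using sum_pos[of S w] fin ne w_pos by simp
  have "1 \<le> f l0"
  proof -
    have "1 = w b0 / (l0 - c b0)"
      using b0 w_pos[OF b0(1)] unfolding l0_def by simp
    also have "\<dots> \<le> f l0"
      unfolding f_def using fin b0(1) w_pos c_le m_less
      by (intro member_le_sum) (auto intro!: less_imp_le[OF divide_pos_pos] order.strict_trans1[OF c_le])
    finally show ?thesis .
  qed
  moreover have "f l1 \<le> 1"
  proof -
    have "f l1 \<le> (\<Sum>b\<in>S. w b / sum w S)"
      unfolding f_def
    proof (rule sum_mono)
      fix b assume b: "b \<in> S"
      have "sum w S \<le> l1 - c b"
        unfolding l1_def using c_le[OF b] by simp
      then show "w b / (l1 - c b) \<le> w b / sum w S"
        using w_pos[OF b] w_sum_pos by (intro divide_left_mono) auto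
    qed
    also have "\<dots> = 1"
      using w_sum_pos by (simp flip: sum_divide_distrib)
    finally show ?thesis .
  qed
  moreover have "isCont f l" if "l0 \<le> l" for l
  proof -
    have "l - c b \<noteq> 0" if "b \<in> S" for b
      using c_le[OF that] m_less \<open>l0 \<le> l\<close> by auto
    then show ?thesis
      unfolding f_def by (auto intro!: continuous_intros)
  qed
  moreover have "l0 \<le> l1"
    unfolding l0_def l1_def using w_le[OF b0(1)] by simp
  ultimately obtain l where "l0 \<le> l" "f l = 1"
    using IVT2[of f l1 1 l0] by auto
  then show ?thesis
    using c_le m_less unfolding f_def by (intro exI[of _ l]) force
qed

lemma sum_weighted_square_shift:
  fixes w y e :: "'b \<Rightarrow> real"
  assumes "\<And>b. b \<in> S \<Longrightarrow> e b \<noteq> 0"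
  shows "(\<Sum>b\<in>S. w b * (y b - m * e b)^2 / e b) =
         (\<Sum>b\<in>S. w b * (y b)^2 / e b) - 2 * m * (\<Sum>b\<in>S. w b * y b) + m^2 * (\<Sum>b\<in>S. w b * e b)"
proof -
  have "(\<Sum>b\<in>S. w b * (y b - m * e b)^2 / e b) =
        (\<Sum>b\<in>S. w b * (y b)^2 / e b - 2 * m * (w b * y b) + m^2 * (w b * e b))"
    by (rule sum.cong) (use assms in \<open>auto simp: field_simps power2_eq_square\<close>)
  also have "\<dots> = (\<Sum>b\<in>S. w b * (y b)^2 / e b) - 2 * m * (\<Sum>b\<in>S. w b * y b) + m^2 * (\<Sum>b\<in>S. w b * e b)"
    by (simp add: sum.distrib sum_subtractf sum_distrib_left)
  finally show ?thesis .
qed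

lemma dsimplex_nonneg: "y \<in> dsimplex S \<Longrightarrow> 0 \<le> y b"
  and dsimplex_sum: "y \<in> dsimplex S \<Longrightarrow> sum y S = 1"
  unfolding dsimplex_def by auto

locale linear_replicator =
  fixes S :: "'b set" and g p :: "'b \<Rightarrow> real" and r :: real
  assumes finite_S: "finite S"
    and g_pos: "\<And>b. b \<in> S \<Longrightarrow> 0 < g b"
    and p_pos: "\<And>b. b \<in> S \<Longrightarrow> 0 < p b"
    and sum_p: "sum p S = r"
    and r_pos: "0 < r"
begin

lemma S_nonempty: "S \<noteq> {}"
  using sum_p r_pos by auto

definition mean_payoff :: "('b \<Rightarrow> real) \<Rightarrow> real" where
  "mean_payoff y = (\<Sum>b\<in>S. g b * y b)"

definition field :: "('b \<Rightarrow> real) \<Rightarrow> 'b \<Rightarrow> real" where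
  "field y b = (1 - r) * g b * y b + p b * mean_payoff y - y b * mean_payoff y"

definition trajectory :: "(real \<Rightarrow> 'b \<Rightarrow> real) \<Rightarrow> bool" where
  "trajectory Y \<longleftrightarrow> (\<forall>t\<ge>0. Y t \<in> dsimplex S) \<and>
     (\<forall>t\<ge>0. \<forall>b\<in>S. ((\<lambda>s. Y s b) has_real_derivative field (Y t) b) (at t within {0..}))"

definition perron_root :: real where
  "perron_root = (SOME l. (\<forall>b\<in>S. (1 - r) * g b < l) \<and> (\<Sum>b\<in>S. g b * p b / (l - (1 - r) * g b)) = 1)"

definition gap :: "'b \<Rightarrow> real" where
  "gap b = perron_root - (1 - r) * g b"

lemma perron_root_spec: "(\<forall>b\<in>S. 0 < gap b) \<and> (\<Sum>b\<in>S. g b * p b / gap b) = 1"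
proof -
  have "\<exists>l. (\<forall>b\<in>S. (1 - r) * g b < l) \<and> (\<Sum>b\<in>S. g b * p b / (l - (1 - r) * g b)) = 1"
    using finite_S S_nonempty g_pos p_pos by (intro secular_equation_has_root) auto
  from someI_ex[OF this] show ?thesis
    unfolding gap_def perron_root_def[symmetric] by auto
qed

lemma gap_pos: "b \<in> S \<Longrightarrow> 0 < gap b"
  using perron_root_spec by blast

lemma secular_equation: "(\<Sum>b\<in>S. g b * p b / gap b) = 1"
  using perron_root_spec by blast

definition perron_vector :: "'b \<Rightarrow> real" where
  "perron_vector b = (if b \<in> S then p b / gap b / (\<Sum>c\<in>S. p c / gap c) else 0)"

lemma sum_p_gap_pos: "0 < (\<Sum>b\<in>S. p b / gap b)"
  using finite_S S_nonempty p_pos gap_pos by (intro sum_pos) auto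

lemma perron_vector_pos: "b \<in> S \<Longrightarrow> 0 < perron_vector b"
  unfolding perron_vector_def using p_pos gap_pos sum_p_gap_pos by auto

lemma perron_vector_in_dsimplex: "perron_vector \<in> dsimplex S"
proof -
  have "sum perron_vector S = (\<Sum>b\<in>S. p b / gap b) / (\<Sum>c\<in>S. p c / gap c)"
    unfolding perron_vector_def sum_divide_distrib by simp
  then show ?thesis
    unfolding dsimplex_def using sum_p_gap_pos perron_vector_pos
    by (auto simp: perron_vector_def intro: less_imp_le)
qed

lemma perron_vector_gap: "b \<in> S \<Longrightarrow> perron_vector b * gap b = p b * mean_payoff perron_vector"
proof -
  assume b: "b \<in> S"
  have "mean_payoff perron_vector = (\<Sum>c\<in>S. g c * p c / gap c) / (\<Sum>c\<in>S. p c / gap c)"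
    unfolding mean_payoff_def perron_vector_def sum_divide_distrib by (auto intro: sum.cong)
  then show ?thesis
    using b gap_pos[OF b] unfolding secular_equation perron_vector_def by simp
qed

lemma perron_root_eq: "perron_root = mean_payoff perron_vector"
proof -
  let ?\<eta> = perron_vector and ?\<mu> = "mean_payoff perron_vector"
  have "(\<Sum>b\<in>S. ?\<eta> b * gap b) = r * ?\<mu>"
    using perron_vector_gap sum_p by (simp add: sum_distrib_right[symmetric])
  moreover have "(\<Sum>b\<in>S. ?\<eta> b * gap b) = perron_root * sum ?\<eta> S - (1 - r) * ?\<mu>"
    unfolding gap_def mean_payoff_def
    by (simp add: algebra_simps sum.distrib sum_subtractf sum_distrib_left)
  ultimately show ?thesis
    using dsimplex_sum[OF perron_vector_in_dsimplex] by (simp add: algebra_simps)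
qed

lemma perron_root_pos: "0 < perron_root"
  unfolding perron_root_eq mean_payoff_def
  using finite_S S_nonempty g_pos perron_vector_pos by (intro sum_pos) auto

lemma perron_vector_eigen: "b \<in> S \<Longrightarrow> perron_vector b * gap b = p b * perron_root"
  using perron_vector_gap perron_root_eq by simp

lemma field_perron_vector: "b \<in> S \<Longrightarrow> field perron_vector b = 0"
  using perron_vector_eigen[of b]
  unfolding field_def perron_root_eq[symmetric] gap_def by (simp add: algebra_simps)

definition dual_vector :: "'b \<Rightarrow> real" where
  "dual_vector b = g b / gap b / (\<Sum>c\<in>S. g c * perron_vector c / gap c)"

lemma sum_g_perron_gap_pos: "0 < (\<Sum>b\<in>S. g b * perron_vector b / gap b)"
  using finite_S S_nonempty g_pos perron_vector_pos gap_pos by (intro sum_pos) auto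

lemma dual_vector_pos: "b \<in> S \<Longrightarrow> 0 < dual_vector b"
  unfolding dual_vector_def using g_pos gap_pos sum_g_perron_gap_pos by auto

lemma dual_vector_perron_vector: "(\<Sum>b\<in>S. dual_vector b * perron_vector b) = 1"
proof -
  have "(\<Sum>b\<in>S. dual_vector b * perron_vector b) =
      (\<Sum>b\<in>S. g b * perron_vector b / gap b) / (\<Sum>c\<in>S. g c * perron_vector c / gap c)"
    unfolding dual_vector_def sum_divide_distrib by (intro sum.cong) auto
  then show ?thesis
    using sum_g_perron_gap_pos by simp
qed

definition dual_rate :: real where
  "dual_rate = (\<Sum>b\<in>S. dual_vector b * p b)"

lemma dual_rate_eq: "dual_rate = 1 / (\<Sum>b\<in>S. g b * perron_vector b / gap b)"
proof -
  have "dual_rate = (\<Sum>b\<in>S. g b * p b / gap b) / (\<Sum>c\<in>S. g c * perron_vector c / gap c)"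
    unfolding dual_rate_def dual_vector_def sum_divide_distrib by (intro sum.cong) auto
  then show ?thesis
    unfolding secular_equation .
qed

lemma dual_rate_pos: "0 < dual_rate"
  unfolding dual_rate_eq using sum_g_perron_gap_pos by simp

lemma dual_vector_eigen: "b \<in> S \<Longrightarrow> dual_vector b * gap b = g b * dual_rate"
  using gap_pos[of b] unfolding dual_vector_def dual_rate_eq by simp

definition dual_mass :: "('b \<Rightarrow> real) \<Rightarrow> real" where
  "dual_mass y = (\<Sum>b\<in>S. dual_vector b * y b)"

definition chi2 :: "('b \<Rightarrow> real) \<Rightarrow> real" where
  "chi2 y = (\<Sum>b\<in>S. dual_vector b * (y b)^2 / perron_vector b)"

definition payoff_chi2 :: "('b \<Rightarrow> real) \<Rightarrow> real" where
  "payoff_chi2 y = (\<Sum>b\<in>S. g b * (y b)^2 / perron_vector b)"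

definition lyapunov :: "('b \<Rightarrow> real) \<Rightarrow> real" where
  "lyapunov y = chi2 y / (dual_mass y)^2"

lemma perron_vector_nonzero: "b \<in> S \<Longrightarrow> perron_vector b \<noteq> 0"
  using perron_vector_pos by fastforce

lemma dual_vector_field_coeff: "b \<in> S \<Longrightarrow> dual_vector b * ((1 - r) * g b) = perron_root * dual_vector b - g b * dual_rate"
  using dual_vector_eigen[of b] unfolding gap_def by (simp add: algebra_simps)

lemma dual_vector_p_div: "b \<in> S \<Longrightarrow> dual_vector b * p b / perron_vector b = g b * dual_rate / perron_root"
proof -
  assume b: "b \<in> S"
  have "p b = perron_vector b * gap b / perron_root"
    using perron_vector_eigen[OF b] perron_root_pos by (simp add: field_simps)
  then show ?thesis
    using dual_vector_eigen[OF b] perron_vector_nonzero[OF b] by (simp add: field_simps)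
qed

lemma dual_mass_field:
  "(\<Sum>b\<in>S. dual_vector b * field y b) = (perron_root - mean_payoff y) * dual_mass y"
proof -
  have "(\<Sum>b\<in>S. dual_vector b * field y b) =
      (\<Sum>b\<in>S. perron_root * (dual_vector b * y b) - dual_rate * (g b * y b)
        + mean_payoff y * (dual_vector b * p b) - mean_payoff y * (dual_vector b * y b))"
  proof (rule sum.cong[OF refl])
    fix b assume b: "b \<in> S"
    have "dual_vector b * field y b = dual_vector b * ((1 - r) * g b) * y b
        + mean_payoff y * (dual_vector b * p b) - mean_payoff y * (dual_vector b * y b)"
      unfolding field_def by (simp add: algebra_simps)
    then show "dual_vector b * field y b = perron_root * (dual_vector b * y b) - dual_rate * (g b * y b)
        + mean_payoff y * (dual_vector b * p b) - mean_payoff y * (dual_vector b * y b)"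
      unfolding dual_vector_field_coeff[OF b] by (simp add: algebra_simps)
  qed
  also have "\<dots> = perron_root * dual_mass y - dual_rate * mean_payoff y
      + mean_payoff y * dual_rate - mean_payoff y * dual_mass y"
    unfolding dual_mass_def mean_payoff_def dual_rate_def
    by (simp add: sum.distrib sum_subtractf sum_distrib_left)
  finally show ?thesis
    by (simp add: algebra_simps)
qed

lemma chi2_field:
  "(\<Sum>b\<in>S. dual_vector b * (y b * field y b) / perron_vector b) =
     perron_root * chi2 y - dual_rate * payoff_chi2 y + dual_rate * (mean_payoff y)^2 / perron_root
     - mean_payoff y * chi2 y"
proof -
  have "(\<Sum>b\<in>S. dual_vector b * (y b * field y b) / perron_vector b) =
      (\<Sum>b\<in>S. perron_root * (dual_vector b * (y b)^2 / perron_vector b)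
        - dual_rate * (g b * (y b)^2 / perron_vector b)
        + (mean_payoff y * dual_rate / perron_root) * (g b * y b)
        - mean_payoff y * (dual_vector b * (y b)^2 / perron_vector b))"
  proof (rule sum.cong[OF refl])
    fix b assume b: "b \<in> S"
    have "dual_vector b * (y b * field y b) / perron_vector b =
        dual_vector b * ((1 - r) * g b) * (y b)^2 / perron_vector b
        + mean_payoff y * y b * (dual_vector b * p b / perron_vector b)
        - mean_payoff y * (dual_vector b * (y b)^2 / perron_vector b)"
      unfolding field_def using perron_vector_nonzero[OF b]
      by (simp add: field_simps power2_eq_square)
    then show "dual_vector b * (y b * field y b) / perron_vector b =
        perron_root * (dual_vector b * (y b)^2 / perron_vector b)
        - dual_rate * (g b * (y b)^2 / perron_vector b)
        + (mean_payoff y * dual_rate / perron_root) * (g b * y b)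
        - mean_payoff y * (dual_vector b * (y b)^2 / perron_vector b)"
      unfolding dual_vector_field_coeff[OF b] dual_vector_p_div[OF b]
      using perron_root_pos perron_vector_nonzero[OF b] by (simp add: field_simps)
  qed
  also have "\<dots> = perron_root * chi2 y - dual_rate * payoff_chi2 y
      + (mean_payoff y * dual_rate / perron_root) * mean_payoff y - mean_payoff y * chi2 y"
    unfolding chi2_def payoff_chi2_def mean_payoff_def
    by (simp add: sum.distrib sum_subtractf sum_distrib_left)
  finally show ?thesis
    by (simp add: power2_eq_square)
qed

definition dual_payoff_ratio :: real where
  "dual_payoff_ratio = Max ((\<lambda>b. dual_vector b / g b) ` S)"

lemma dual_vector_le_ratio: "b \<in> S \<Longrightarrow> dual_vector b \<le> dual_payoff_ratio * g b"
proof -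
  assume b: "b \<in> S"
  then have "dual_vector b / g b \<le> dual_payoff_ratio"
    unfolding dual_payoff_ratio_def using finite_S by auto
  then show ?thesis
    using g_pos[OF b] by (simp add: divide_le_eq)
qed

lemma dual_payoff_ratio_pos: "0 < dual_payoff_ratio"
proof -
  obtain b where "b \<in> S"
    using S_nonempty by auto
  then have "0 < dual_payoff_ratio * g b"
    using dual_vector_le_ratio dual_vector_pos by (meson less_le_trans)
  then show ?thesis
    using g_pos[OF \<open>b \<in> S\<close>] by (auto simp: zero_less_mult_iff)
qed

lemma chi2_excess_le:
  "chi2 y - (dual_mass y)^2 \<le> dual_payoff_ratio * (payoff_chi2 y - (mean_payoff y)^2 / perron_root)"
proof -
  define m where "m = mean_payoff y / perron_root"
  have dual_dev: "(\<Sum>b\<in>S. dual_vector b * (y b - m * perron_vector b)^2 / perron_vector b) =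
      chi2 y - 2 * m * dual_mass y + m^2"
    using sum_weighted_square_shift[of S perron_vector dual_vector y m] perron_vector_nonzero
      dual_vector_perron_vector
    unfolding chi2_def dual_mass_def by simp
  have payoff_dev: "(\<Sum>b\<in>S. g b * (y b - m * perron_vector b)^2 / perron_vector b) =
      payoff_chi2 y - (mean_payoff y)^2 / perron_root"
    using sum_weighted_square_shift[of S perron_vector g y m] perron_vector_nonzero perron_root_pos
    unfolding payoff_chi2_def m_def mean_payoff_def[symmetric] perron_root_eq[symmetric]
    by (simp add: field_simps power2_eq_square)
  have "chi2 y - (dual_mass y)^2 \<le> chi2 y - 2 * m * dual_mass y + m^2"
    using zero_le_power2[of "dual_mass y - m"] by (simp add: power2_eq_square algebra_simps)
  also have "\<dots> \<le> (\<Sum>b\<in>S. dual_payoff_ratio * (g b * (y b - m * perron_vector b)^2 / perron_vector b))"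
    unfolding dual_dev[symmetric]
  proof (rule sum_mono)
    fix b assume b: "b \<in> S"
    have "0 \<le> (y b - m * perron_vector b)^2 / perron_vector b"
      using perron_vector_pos[OF b] by simp
    from mult_right_mono[OF dual_vector_le_ratio[OF b] this]
    show "dual_vector b * (y b - m * perron_vector b)^2 / perron_vector b
        \<le> dual_payoff_ratio * (g b * (y b - m * perron_vector b)^2 / perron_vector b)"
      by (simp add: algebra_simps)
  qed
  also have "\<dots> = dual_payoff_ratio * (payoff_chi2 y - (mean_payoff y)^2 / perron_root)"
    unfolding payoff_dev[symmetric] by (rule sum_distrib_left[symmetric])
  finally show ?thesis .
qed

lemma component_deviation_le:
  assumes b: "b \<in> S"
  shows "dual_vector b * (y b - dual_mass y * perron_vector b)^2 / perron_vector b \<le> chi2 y - (dual_mass y)^2"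
proof -
  have "dual_vector b * (y b - dual_mass y * perron_vector b)^2 / perron_vector b
      \<le> (\<Sum>c\<in>S. dual_vector c * (y c - dual_mass y * perron_vector c)^2 / perron_vector c)"
  proof (rule member_le_sum[OF b _ finite_S])
    fix c assume "c \<in> S - {b}"
    then have "0 < dual_vector c" "0 < perron_vector c"
      using dual_vector_pos perron_vector_pos by auto
    then show "0 \<le> dual_vector c * (y c - dual_mass y * perron_vector c)^2 / perron_vector c"
      by simp
  qed
  also have "\<dots> = chi2 y - (dual_mass y)^2"
    using sum_weighted_square_shift[of S perron_vector dual_vector y "dual_mass y"]
      perron_vector_nonzero dual_vector_perron_vector
    unfolding chi2_def dual_mass_def[symmetric] by (simp add: power2_eq_square)
  finally show ?thesis .
qed

lemma lyapunov_minus_one: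
  "0 < dual_mass y \<Longrightarrow> lyapunov y - 1 = (chi2 y - (dual_mass y)^2) / (dual_mass y)^2"
  unfolding lyapunov_def by (simp add: field_simps)

lemma dual_mass_pos:
  assumes y: "y \<in> dsimplex S"
  shows "0 < dual_mass y"
proof -
  obtain b where b: "b \<in> S" "0 < y b"
  proof (rule ccontr)
    assume "\<not> thesis"
    then have "\<forall>b\<in>S. y b \<le> 0"
      using that by (meson not_less)
    then have "sum y S \<le> 0"
      by (intro sum_nonpos) auto
    then show False
      using dsimplex_sum[OF y] by simp
  qed
  have "0 < dual_vector b * y b"
    using b dual_vector_pos by simp
  also have "\<dots> \<le> dual_mass y"
    unfolding dual_mass_def using finite_S b dsimplex_nonneg[OF y] dual_vector_pos
    by (intro member_le_sum) (auto intro: mult_nonneg_nonneg less_imp_le)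
  finally show ?thesis .
qed

lemma dual_mass_le:
  assumes y: "y \<in> dsimplex S"
  shows "dual_mass y \<le> sum dual_vector S"
proof -
  have "y b \<le> 1" if "b \<in> S" for b
    using member_le_sum[of b S y] that finite_S dsimplex_nonneg[OF y] dsimplex_sum[OF y] by simp
  then show ?thesis
    unfolding dual_mass_def using dual_vector_pos dsimplex_nonneg[OF y]
    by (intro sum_mono) (auto intro: mult_left_le less_imp_le)
qed

lemma chi2_excess_nonneg: "0 \<le> chi2 y - (dual_mass y)^2"
proof -
  obtain b where b: "b \<in> S"
    using S_nonempty by auto
  have "0 \<le> dual_vector b * (y b - dual_mass y * perron_vector b)^2 / perron_vector b"
    using dual_vector_pos[OF b] perron_vector_pos[OF b] by simp
  also have "\<dots> \<le> chi2 y - (dual_mass y)^2"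
    by (rule component_deviation_le[OF b])
  finally show ?thesis .
qed

definition decay_rate :: real where
  "decay_rate = 2 * dual_rate / dual_payoff_ratio"

lemma decay_rate_pos: "0 < decay_rate"
  unfolding decay_rate_def using dual_rate_pos dual_payoff_ratio_pos by simp

lemma trajectory_in_dsimplex: "trajectory Y \<Longrightarrow> 0 \<le> t \<Longrightarrow> Y t \<in> dsimplex S"
  unfolding trajectory_def by blast

lemma lyapunov_has_derivative:
  assumes Y: "trajectory Y" and t: "0 \<le> t"
  shows "((\<lambda>s. lyapunov (Y s)) has_real_derivative
      - 2 * dual_rate * (payoff_chi2 (Y t) - (mean_payoff (Y t))^2 / perron_root) / (dual_mass (Y t))^2)
      (at t within {0..})"
proof -
  let ?y = "Y t"
  have dY: "((\<lambda>s. Y s b) has_real_derivative field ?y b) (at t within {0..})" if "b \<in> S" for b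
    using Y t that unfolding trajectory_def by blast
  have "((\<lambda>s. dual_mass (Y s)) has_real_derivative (\<Sum>b\<in>S. dual_vector b * field ?y b))
      (at t within {0..})"
    unfolding dual_mass_def by (intro DERIV_sum DERIV_cmult dY)
  then have dC: "((\<lambda>s. dual_mass (Y s)) has_real_derivative (perron_root - mean_payoff ?y) * dual_mass ?y)
      (at t within {0..})"
    by (simp only: dual_mass_field)
  have "((\<lambda>s. chi2 (Y s)) has_real_derivative
      (\<Sum>b\<in>S. dual_vector b * (of_nat 2 * (field ?y b * ?y b ^ (2 - Suc 0))) / perron_vector b))
      (at t within {0..})"
    unfolding chi2_def by (intro DERIV_sum DERIV_cdivide DERIV_cmult DERIV_power dY)
  then have dV: "((\<lambda>s. chi2 (Y s)) has_real_derivative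
      2 * (\<Sum>b\<in>S. dual_vector b * (?y b * field ?y b) / perron_vector b)) (at t within {0..})"
    by (simp add: sum_distrib_left algebra_simps)
  have C_pos: "0 < dual_mass ?y"
    by (rule dual_mass_pos[OF trajectory_in_dsimplex[OF Y t]])
  show ?thesis
    unfolding lyapunov_def
  \<comment> \<open>the terms with \<open>perron_root\<close> and with \<open>mean_payoff ?y\<close> cancel in the quotient rule\<close>
  proof (rule DERIV_cong[OF DERIV_divide[OF dV DERIV_power[OF dC]]])
    show "(dual_mass ?y)^2 \<noteq> 0"
      using C_pos by simp
    show "(2 * (\<Sum>b\<in>S. dual_vector b * (?y b * field ?y b) / perron_vector b) * (dual_mass ?y)^2
        - chi2 ?y * (of_nat 2 * ((perron_root - mean_payoff ?y) * dual_mass ?y * dual_mass ?y ^ (2 - Suc 0))))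
        / ((dual_mass ?y)^2 * (dual_mass ?y)^2)
      = - 2 * dual_rate * (payoff_chi2 ?y - (mean_payoff ?y)^2 / perron_root) / (dual_mass ?y)^2"
      unfolding chi2_field using C_pos perron_root_pos by (simp add: field_simps power2_eq_square)
  qed
qed

lemma lyapunov_decay:
  assumes Y: "trajectory Y" and t: "0 \<le> t"
  shows "lyapunov (Y t) - 1 \<le> (lyapunov (Y 0) - 1) * exp (- decay_rate * t)"
proof (rule exp_decay_if_DERIV_le[OF _ _ t])
  fix s :: real assume s: "0 \<le> s"
  let ?y = "Y s"
  let ?X = "payoff_chi2 ?y - (mean_payoff ?y)^2 / perron_root"
  show "((\<lambda>s. lyapunov (Y s) - 1) has_real_derivative - 2 * dual_rate * ?X / (dual_mass ?y)^2)
      (at s within {0..})"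
    using lyapunov_has_derivative[OF Y s] by (rule DERIV_diff[OF _ DERIV_const, simplified])
  have C_pos: "0 < dual_mass ?y"
    by (rule dual_mass_pos[OF trajectory_in_dsimplex[OF Y s]])
  have "decay_rate * (lyapunov ?y - 1) \<le> decay_rate * (dual_payoff_ratio * ?X / (dual_mass ?y)^2)"
    unfolding lyapunov_minus_one[OF C_pos] using decay_rate_pos chi2_excess_le[of ?y]
    by (intro mult_left_mono divide_right_mono) auto
  also have "\<dots> = 2 * dual_rate * ?X / (dual_mass ?y)^2"
    unfolding decay_rate_def using dual_payoff_ratio_pos by simp
  finally show "- 2 * dual_rate * ?X / (dual_mass ?y)^2 \<le> - decay_rate * (lyapunov ?y - 1)"
    by simp
qed

lemma deviation_tendsto_zero:
  assumes Y: "trajectory Y" and b: "b \<in> S"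
  shows "((\<lambda>t. Y t b - dual_mass (Y t) * perron_vector b) \<longlongrightarrow> 0) at_top"
proof -
  define M where "M = perron_vector b / dual_vector b * (sum dual_vector S)^2 * (lyapunov (Y 0) - 1)"
  have bound: "(Y t b - dual_mass (Y t) * perron_vector b)^2 \<le> M * exp (- decay_rate * t)"
    if t: "0 \<le> t" for t
  proof -
    let ?C = "dual_mass (Y t)"
    have C_pos: "0 < ?C"
      by (rule dual_mass_pos[OF trajectory_in_dsimplex[OF Y t]])
    have "dual_vector b * (Y t b - ?C * perron_vector b)^2 / perron_vector b \<le> ?C^2 * (lyapunov (Y t) - 1)"
      using component_deviation_le[OF b, of "Y t"] C_pos unfolding lyapunov_minus_one[OF C_pos] by simp
    also have "\<dots> \<le> (sum dual_vector S)^2 * ((lyapunov (Y 0) - 1) * exp (- decay_rate * t))"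
    proof (rule mult_mono)
      show "?C^2 \<le> (sum dual_vector S)^2"
        using C_pos dual_mass_le[OF trajectory_in_dsimplex[OF Y t]] by (intro power_mono) auto
      show "lyapunov (Y t) - 1 \<le> (lyapunov (Y 0) - 1) * exp (- decay_rate * t)"
        by (rule lyapunov_decay[OF Y t])
      show "0 \<le> lyapunov (Y t) - 1"
        using lyapunov_minus_one[OF C_pos] chi2_excess_nonneg[of "Y t"] by simp
    qed simp
    finally show ?thesis
      unfolding M_def using dual_vector_pos[OF b] perron_vector_pos[OF b] by (simp add: field_simps)
  qed
  have "filterlim (\<lambda>t. - decay_rate * t) at_bot at_top"
    using decay_rate_pos
    by (auto simp: filterlim_uminus_at_bot
        intro!: filterlim_tendsto_pos_mult_at_top tendsto_const filterlim_ident)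
  then have bound_lim: "((\<lambda>t. M * exp (- decay_rate * t)) \<longlongrightarrow> 0) at_top"
    by (intro tendsto_mult_right_zero filterlim_compose[OF exp_at_bot])
  have "((\<lambda>t. (Y t b - dual_mass (Y t) * perron_vector b)^2) \<longlongrightarrow> 0) at_top"
    by (rule tendsto_sandwich[OF _ _ tendsto_const bound_lim])
       (use bound in \<open>auto intro: eventually_mono[OF eventually_ge_at_top[of 0]]\<close>)
  then have "((\<lambda>t. sqrt ((Y t b - dual_mass (Y t) * perron_vector b)^2)) \<longlongrightarrow> sqrt 0) at_top"
    by (rule tendsto_real_sqrt)
  then show ?thesis
    by (simp add: tendsto_rabs_zero_iff)
qed

lemma trajectory_tendsto_perron_vector:
  assumes Y: "trajectory Y" and b: "b \<in> S"
  shows "((\<lambda>t. Y t b) \<longlongrightarrow> perron_vector b) at_top"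
proof -
  have "((\<lambda>t. \<Sum>c\<in>S. Y t c - dual_mass (Y t) * perron_vector c) \<longlongrightarrow> (\<Sum>c\<in>S. 0)) at_top"
    by (intro tendsto_sum deviation_tendsto_zero[OF Y])
  moreover have "\<forall>\<^sub>F t in at_top. (\<Sum>c\<in>S. Y t c - dual_mass (Y t) * perron_vector c) = 1 - dual_mass (Y t)"
    using eventually_ge_at_top[of 0]
  proof eventually_elim
    case (elim t)
    then show ?case
      using dsimplex_sum[OF trajectory_in_dsimplex[OF Y elim]] dsimplex_sum[OF perron_vector_in_dsimplex]
      by (simp add: sum_subtractf sum_distrib_left[symmetric])
  qed
  ultimately have "((\<lambda>t. 1 - dual_mass (Y t)) \<longlongrightarrow> 0) at_top"
    by (simp add: tendsto_cong)
  then have "((\<lambda>t. 1 - (1 - dual_mass (Y t))) \<longlongrightarrow> 1 - 0) at_top"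
    by (intro tendsto_diff tendsto_const)
  then have "((\<lambda>t. dual_mass (Y t)) \<longlongrightarrow> 1) at_top"
    by simp
  then have "((\<lambda>t. (Y t b - dual_mass (Y t) * perron_vector b) + dual_mass (Y t) * perron_vector b)
      \<longlongrightarrow> 0 + 1 * perron_vector b) at_top"
    by (intro tendsto_add deviation_tendsto_zero[OF Y b] tendsto_mult tendsto_const)
  then show ?thesis
    by simp
qed

lemma rest_point_unique:
  assumes y: "y \<in> dsimplex S" and rest: "\<And>b. b \<in> S \<Longrightarrow> field y b = 0"
  shows "y = perron_vector"
proof
  fix b
  show "y b = perron_vector b"
  proof (cases "b \<in> S")
    case True
    have "trajectory (\<lambda>_. y)"
      unfolding trajectory_def using y rest by auto
    from trajectory_tendsto_perron_vector[OF this True] show ?thesis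
      by (simp add: tendsto_const_iff)
  next
    case False
    then show ?thesis
      using y perron_vector_in_dsimplex unfolding dsimplex_def by auto
  qed
qed

end

lemma fun_upd_in_types: "b \<in> partners A d \<Longrightarrow> v \<in> A d \<Longrightarrow> b(d := v) \<in> types A"
  unfolding partners_def types_def by (auto simp: PiE_def Pi_def)

lemma tfreq_nonneg: "x \<in> dsimplex (types A) \<Longrightarrow> 0 \<le> tfreq A x d v"
  unfolding tfreq_def dsimplex_def by (auto intro: sum_nonneg)

lemma le_tfreq:
  fixes A :: "'i::finite \<Rightarrow> 'v::finite set"
  shows "x \<in> dsimplex (types A) \<Longrightarrow> a \<in> types A \<Longrightarrow> x a \<le> tfreq A x d (a d)"
  unfolding tfreq_def dsimplex_def by (intro member_le_sum) auto

lemma sum_tfreq: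
  fixes A :: "'i::finite \<Rightarrow> 'v::finite set"
  assumes "x \<in> dsimplex (types A)"
  shows "(\<Sum>v\<in>A d. tfreq A x d v) = 1"
proof -
  have "(\<Sum>v\<in>A d. tfreq A x d v) = sum x (types A)"
    unfolding tfreq_def by (rule sum.group) (auto simp: types_def)
  then show ?thesis
    using assms unfolding dsimplex_def by simp
qed

lemma prod_tfreq_pos_if_psupp:
  fixes A :: "'i::finite \<Rightarrow> 'v::finite set"
  assumes x: "x \<in> dsimplex (types A)" and b: "b \<in> psupp A x d"
  shows "0 < (\<Prod>d'\<in>UNIV - {d}. tfreq A x d' (b d'))"
proof -
  have "0 < pfreq A x d b" and bP: "b \<in> partners A d"
    using b unfolding psupp_def by auto
  then obtain v where v: "v \<in> A d" "0 < x (b(d := v))"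
    unfolding pfreq_def by (metis not_le sum_nonpos)
  show ?thesis
  proof (rule prod_pos)
    fix d' assume "d' \<in> UNIV - {d}"
    then show "0 < tfreq A x d' (b d')"
      using le_tfreq[OF x fun_upd_in_types[OF bP v(1)], of d'] v(2) by simp
  qed
qed

text \<open>At a stationary state a type whose traits are all present is itself present:
  recombination produces it at a positive rate, which stationarity forbids if \<open>x a = 0\<close>.\<close>
lemma prod_tfreq_eq_zero_if_not_psupp:
  fixes A :: "'i::finite \<Rightarrow> 'v::finite set"
  assumes stat: "stationary A r g1 f2 x" and r: "0 < r"
    and combination: "\<And>a. a \<in> types A \<Longrightarrow> 0 < (\<Prod>d\<in>UNIV. tfreq A x d (a d)) \<Longrightarrow> 0 < f2 a x"
    and b: "b \<in> partners A d - psupp A x d"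
  shows "(\<Prod>d'\<in>UNIV - {d}. tfreq A x d' (b d')) = 0"
proof (rule ccontr)
  have x: "x \<in> dsimplex (types A)"
    using stat unfolding stationary_def by blast
  assume "(\<Prod>d'\<in>UNIV - {d}. tfreq A x d' (b d')) \<noteq> 0"
  then have "tfreq A x d' (b d') \<noteq> 0" if "d' \<noteq> d" for d'
    using that by (auto simp: prod_zero_iff)
  then have others_pos: "0 < tfreq A x d' (b d')" if "d' \<noteq> d" for d'
    using that tfreq_nonneg[OF x] by (simp add: order_less_le)
  have "\<exists>v\<in>A d. tfreq A x d v \<noteq> 0"
  proof (rule ccontr)
    assume "\<not> ?thesis"
    then show False
      using sum_tfreq[OF x, of d] by (simp add: sum.neutral)
  qed
  then obtain v where v: "v \<in> A d" "0 < tfreq A x d v"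
    using tfreq_nonneg[OF x] by (auto simp: order_less_le)
  let ?a = "b(d := v)"
  have a: "?a \<in> types A"
    using b v(1) by (intro fun_upd_in_types) auto
  have "0 < f2 ?a x"
    using others_pos v(2) by (intro combination[OF a] prod_pos) auto
  moreover have "(1 - r) * (g1 ?a x * x ?a) + r * f2 ?a x - x ?a = 0"
    using stat a unfolding stationary_def by blast
  ultimately have "x ?a \<noteq> 0"
    using r by auto
  then have "0 < x ?a"
    using x unfolding dsimplex_def by (simp add: order_less_le)
  also have "x ?a \<le> pfreq A x d b"
    unfolding pfreq_def using v(1) x unfolding dsimplex_def by (intro member_le_sum) auto
  finally show False
    using b unfolding psupp_def by auto
qed

lemma sum_prod_tfreq_psupp:
  fixes A :: "'i::finite \<Rightarrow> 'v::finite set"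
  assumes stat: "stationary A r g1 f2 x" and r: "0 < r"
    and combination: "\<And>a. a \<in> types A \<Longrightarrow> 0 < (\<Prod>d\<in>UNIV. tfreq A x d (a d)) \<Longrightarrow> 0 < f2 a x"
  shows "(\<Sum>b\<in>psupp A x d. \<Prod>d'\<in>UNIV - {d}. tfreq A x d' (b d')) = 1"
proof -
  have x: "x \<in> dsimplex (types A)"
    using stat unfolding stationary_def by blast
  have "(\<Sum>b\<in>psupp A x d. \<Prod>d'\<in>UNIV - {d}. tfreq A x d' (b d'))
      = (\<Sum>b\<in>partners A d. \<Prod>d'\<in>UNIV - {d}. tfreq A x d' (b d'))"
    using prod_tfreq_eq_zero_if_not_psupp[OF stat r combination]
    by (intro sum.mono_neutral_left) (auto simp: psupp_def)
  also have "\<dots> = (\<Prod>d'\<in>UNIV - {d}. \<Sum>v\<in>A d'. tfreq A x d' v)"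
    unfolding partners_def by (rule prod_sum_PiE[symmetric]) auto
  also have "\<dots> = 1"
    using sum_tfreq[OF x] by simp
  finally show ?thesis .
qed

lemma partner_dynamics_globally_stable:
  fixes A :: "'i::finite \<Rightarrow> 'v::finite set"
  assumes stat: "stationary A r g1 f2 x" and r: "0 < r"
    and combination: "\<And>a. a \<in> types A \<Longrightarrow> 0 < (\<Prod>d\<in>UNIV. tfreq A x d (a d)) \<Longrightarrow> 0 < f2 a x"
    and g1_pos: "\<And>a. a \<in> types A \<Longrightarrow> 0 < g1 a x"
    and ad: "ad \<in> A d"
    and vu: "\<And>y. y \<in> dsimplex (psupp A x d) \<Longrightarrow> vy A f2 x d ad y = uy A g1 x d ad y"
  shows "unique_gs_equilibrium A r g1 f2 x d ad"
proof -
  define S where "S = psupp A x d"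
  define g where "g b = g1 (b(d := ad)) x" for b
  define p where "p b = r * (\<Prod>d'\<in>UNIV - {d}. tfreq A x d' (b d'))" for b
  have x: "x \<in> dsimplex (types A)"
    using stat unfolding stationary_def by blast
  interpret linear_replicator S g p r
  proof
    show "finite S" by simp
    show "0 < g b" if "b \<in> S" for b
      using that g1_pos fun_upd_in_types[of _ A d ad] ad unfolding g_def S_def psupp_def by auto
    show "0 < p b" if "b \<in> S" for b
      using that prod_tfreq_pos_if_psupp[OF x] r unfolding p_def S_def by auto
    show "sum p S = r"
      using sum_prod_tfreq_psupp[OF stat r combination] unfolding p_def S_def
      by (simp flip: sum_distrib_left)
  qed (rule r)
  have field_eq: "partner_field A r g1 f2 x d ad y b = field y b" if "y \<in> dsimplex S" for y b
    using vu[OF that[unfolded S_def]]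
    unfolding field_def mean_payoff_def
    unfolding partner_field_def Ury_def uy_def g_def p_def S_def
    by (simp add: algebra_simps)
  have trajectory: "trajectory Y" if "partner_solution A r g1 f2 x d ad Y" for Y
    using that unfolding partner_solution_def trajectory_def S_def[symmetric] by (metis field_eq)
  show ?thesis
    unfolding unique_gs_equilibrium_def S_def[symmetric]
  proof (intro bexI conjI ballI allI impI)
    show "perron_vector \<in> dsimplex S"
      by (rule perron_vector_in_dsimplex)
    show "partner_field A r g1 f2 x d ad perron_vector b = 0" if "b \<in> S" for b
      using field_eq[OF perron_vector_in_dsimplex] field_perron_vector[OF that] by simp
    show "\<eta> = perron_vector"
      if "\<eta> \<in> dsimplex S" "\<forall>b\<in>S. partner_field A r g1 f2 x d ad \<eta> b = 0" for \<eta>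
      using that field_eq by (intro rest_point_unique) auto
    show "((\<lambda>t. Y t b) \<longlongrightarrow> perron_vector b) at_top"
      if "partner_solution A r g1 f2 x d ad Y" "b \<in> S" for Y b
      using trajectory_tendsto_perron_vector[OF trajectory] that by blast
  qed
qed

theorem mainTheorem15:
  fixes A :: "'i::finite \<Rightarrow> 'v::finite set"
    and u :: "('i \<Rightarrow> 'v) \<Rightarrow> ('i \<Rightarrow> 'v) \<Rightarrow> real"
    and g1 f2 :: "('i \<Rightarrow> 'v) \<Rightarrow> (('i \<Rightarrow> 'v) \<Rightarrow> real) \<Rightarrow> real"
    and r :: real
    and xs :: "('i \<Rightarrow> 'v) \<Rightarrow> real"
  assumes D2: "CARD('i) \<ge> 2"
    and A_ne: "\<forall>d. A d \<noteq> {}"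
    and u_pos: "\<forall>a \<in> types A. \<forall>a' \<in> types A. u a a' > 0"
    and r: "0 < r" "r \<le> 1"
    and dyn: "gen_recombinator A u g1 f2"
    and g1_pos: "\<forall>x \<in> dsimplex (types A). \<forall>a \<in> types A. g1 a x > 0"
    and stat: "stationary A r g1 f2 xs"
    and vu: "\<forall>d. \<forall>ad \<in> A d. tfreq A xs d ad = 0 \<longrightarrow>
               (\<forall>y \<in> dsimplex (psupp A xs d). vy A f2 xs d ad y = uy A g1 xs d ad y)"
  shows "\<forall>d. \<forall>ad \<in> A d. tfreq A xs d ad = 0 \<longrightarrow> unique_gs_equilibrium A r g1 f2 xs d ad"
proof (intro allI ballI impI)
  fix d ad assume ad: "ad \<in> A d" and absent: "tfreq A xs d ad = 0"
  have xs: "xs \<in> dsimplex (types A)"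
    using stat unfolding stationary_def by blast
  have combination: "\<And>a. a \<in> types A \<Longrightarrow> 0 < (\<Prod>d\<in>UNIV. tfreq A xs d (a d)) \<Longrightarrow> 0 < f2 a xs"
    using dyn xs unfolding gen_recombinator_def Let_def by blast
  show "unique_gs_equilibrium A r g1 f2 xs d ad"
    using stat r(1) combination g1_pos xs ad vu absent
    by (intro partner_dynamics_globally_stable) auto
qed

end
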